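(* Let $n>2k-t$, $k>t$, and let $\mathcal{S}_a$ be a maximal set of $k$-spaces in $\mathrm{AG}(n,q)$ pairwise intersecting in at least a $t$-space. Let $\psi(\mathcal{S}_a)=\min\{\dim T: T\text{ an affine subspace},\ \dim(T\cap\alpha)\geq t\ \forall\alpha\in\mathcal{S}_a\}$ and let $\mathcal{T}$ be the set of all affine $\psi(\mathcal{S}_a)$-dimensional subspaces meeting every element of $\mathcal{S}_a$ in at least a $t$-space. If $\psi(\mathcal{S}_a)=t+1$ and $|\mathcal{T}|\leq 2$, then \[|\mathcal{S}_a|\leq 2\left[{n-t-1\atop k-t-1}\right]_q+(\theta_{t+1}\theta_{k-t}-\theta_{t+1}-\theta_{k-t})\theta_{k-t}\left[{n-t-2\atop k-t-2}\right]_q.\]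
   Context: Affine subspaces intersect in at least a $t$-space if their affine intersection has dimension at least $t$. $\left[{n\atop k}\right]_q=\frac{(q^n-1)\cdots(q^{n-k+1}-1)}{(q^k-1)\cdots(q-1)}$ for $k>0$, $=1$ for $k=0$; $\theta_m=\frac{q^{m+1}-1}{q-1}$. Maximal means no further affine $k$-space can be added keeping the property. *)

theory Defs
  imports "HOL-Analysis.Analysis"
begin

text \<open>The affine space AG(n,q) is modelled as the vector space 'a^'n over a finite
field 'a with CARD('a) = q and CARD('n) = n.\<close>

definition aff_sub :: "('a::field ^ 'n) set \<Rightarrow> bool" where
  "aff_sub S \<longleftrightarrow> (\<exists>v W. vec.subspace W \<and> S = (\<lambda>w. v + w) ` W)"

definition adim :: "('a::field ^ 'n) set \<Rightarrow> nat" where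
  "adim S = vec.dim {x - y | x y. x \<in> S \<and> y \<in> S}"

definition kspace :: "nat \<Rightarrow> ('a::field ^ 'n) set \<Rightarrow> bool" where
  "kspace k S \<longleftrightarrow> aff_sub S \<and> adim S = k"

definition meets_t :: "nat \<Rightarrow> ('a::field ^ 'n) set \<Rightarrow> ('a ^ 'n) set \<Rightarrow> bool" where
  "meets_t t S T \<longleftrightarrow> S \<inter> T \<noteq> {} \<and> adim (S \<inter> T) \<ge> t"

definition t_intersecting :: "nat \<Rightarrow> nat \<Rightarrow> ('a::field ^ 'n) set set \<Rightarrow> bool" where
  "t_intersecting k t F \<longleftrightarrow> (\<forall>S\<in>F. kspace k S) \<and> (\<forall>S\<in>F. \<forall>T\<in>F. meets_t t S T)"

definition maximal_t_intersecting :: "nat \<Rightarrow> nat \<Rightarrow> ('a::field ^ 'n) set set \<Rightarrow> bool" where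
  "maximal_t_intersecting k t F \<longleftrightarrow> t_intersecting k t F \<and>
     (\<forall>B. kspace k B \<and> B \<notin> F \<longrightarrow> \<not> t_intersecting k t (insert B F))"

definition psi :: "nat \<Rightarrow> ('a::field ^ 'n) set set \<Rightarrow> nat" where
  "psi t F = (LEAST d. \<exists>T. aff_sub T \<and> adim T = d \<and> (\<forall>S\<in>F. meets_t t T S))"

definition psi_spaces :: "nat \<Rightarrow> ('a::field ^ 'n) set set \<Rightarrow> ('a ^ 'n) set set" where
  "psi_spaces t F = {T. aff_sub T \<and> adim T = psi t F \<and> (\<forall>S\<in>F. meets_t t T S)}"

text \<open>Gaussian binomial coefficient [n k]_q; taken to be 0 for k < 0 (and it is 0 for
k > n \<ge> 0 by the product formula).\<close>
definition gbinom :: "nat \<Rightarrow> int \<Rightarrow> int \<Rightarrow> real" where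
  "gbinom q n k = (if k < 0 then 0 else
     (\<Prod>i<nat k. (real q ^ (nat n - i) - 1) / (real q ^ (i + 1) - 1)))"

definition theta :: "nat \<Rightarrow> nat \<Rightarrow> real" where
  "theta q m = (real q ^ (m + 1) - 1) / (real q - 1)"

end

theory Submission
  imports Defs
begin

text \<open>Fix T0 in the set \<T> of psi-spaces. A member of F through some T in \<T> is one of the
  [n-t-1, k-t-1] k-spaces through T. Any other member \<alpha> meets T0 in a t-space \<pi> and contains a
  (t+2)-space \<nu> reached in two steps, each inside a space depending only on the previous choice.
  Since psi > t, some b in F misses a point of \<pi>; a point of \<alpha> \<inter> b outside \<pi> spans with \<pi> a
  (t+1)-space \<tau> \<noteq> T0 inside the join of T0 and b, of dimension at most k + 1, leaving
  theta_{k-t} - 1 choices for \<tau>. Since \<tau> is not in \<T>, some g in F meets \<tau> in less than a t-space;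
  a point of \<alpha> \<inter> g outside \<tau> spans with \<tau> a (t+2)-space \<nu> inside the join of \<tau>, T0 and g,
  of dimension at most k + 2, and \<nu> is not the join of \<tau> and T0, since \<alpha> does not contain T0:
  again theta_{k-t} - 1 choices. With theta_{t+1} - 1 choices for \<pi> and [n-t-2, k-t-2] k-spaces
  through each \<nu>, the bound follows from
  (theta_{t+1} - 1) (theta_{k-t} - 1)^2 \<le> (theta_{t+1} theta_{k-t} - theta_{t+1} - theta_{k-t}) theta_{k-t}.\<close>

section \<open>Counting subspaces of a finite vector space\<close>

lemma span_insert_eq_image:
  fixes x :: "'a::field^'n"
  shows "vec.span (insert x B) = (\<lambda>(c, y). c *s x + y) ` (UNIV \<times> vec.span B)"
proof
  show "vec.span (insert x B) \<subseteq> (\<lambda>(c, y). c *s x + y) ` (UNIV \<times> vec.span B)"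
  proof
    fix z assume "z \<in> vec.span (insert x B)"
    then obtain c where "z - c *s x \<in> vec.span B" using vec.span_insert by blast
    then show "z \<in> (\<lambda>(c, y). c *s x + y) ` (UNIV \<times> vec.span B)"
      by (intro image_eqI[of _ _ "(c, z - c *s x)"]) auto
  qed
  show "(\<lambda>(c, y). c *s x + y) ` (UNIV \<times> vec.span B) \<subseteq> vec.span (insert x B)"
    by (auto intro: vec.span_add vec.span_scale vec.span_base
        vec.span_mono[of B "insert x B", THEN subsetD])
qed

lemma inj_on_scale_add_span:
  fixes x :: "'a::field^'n"
  assumes "x \<notin> vec.span B"
  shows "inj_on (\<lambda>(c, y). c *s x + y) (UNIV \<times> vec.span B)"
proof (rule inj_onI, clarsimp)
  fix c y c' y'
  assume y: "y \<in> vec.span B" and y': "y' \<in> vec.span B" and e: "c *s x + y = c' *s x + y'"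
  show "c = c' \<and> y = y'"
  proof (cases "c = c'")
    case True
    then show ?thesis using e by simp
  next
    case False
    have "(c - c') *s x = y' - y" using e by (simp add: algebra_simps vector_sub_rdistrib)
    then have "x = inverse (c - c') *s (y' - y)"
      using False by (metis vec.scale_scale vec.scale_one left_inverse right_minus_eq)
    then have "x \<in> vec.span B" using y y' by (simp add: vec.span_diff vec.span_scale)
    then show ?thesis using assms by simp
  qed
qed

lemma card_span_independent:
  fixes B :: "('a::{field,finite}^'n) set"
  assumes "vec.independent B"
  shows "card (vec.span B) = CARD('a) ^ card B"
proof -
  have "finite B" using vec.finiteI_independent assms by blast
  then show ?thesis using assms
  proof (induction B rule: finite_induct)
    case empty
    then show ?case by simp
  next
    case (insert x B)
    have xB: "x \<notin> vec.span B" and iB: "vec.independent B"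
      using insert.prems insert.hyps vec.independent_insert by metis+
    have "card (vec.span (insert x B)) = CARD('a) * card (vec.span B)"
      unfolding span_insert_eq_image using inj_on_scale_add_span[OF xB]
      by (simp add: card_image card_cartesian_product)
    then show ?case using insert.IH[OF iB] insert.hyps by simp
  qed
qed

lemma card_subspace:
  fixes W :: "('a::{field,finite}^'n) set"
  assumes "vec.subspace W"
  shows "card W = CARD('a) ^ vec.dim W"
proof -
  obtain B where B: "B \<subseteq> W" "vec.independent B" "W \<subseteq> vec.span B" "card B = vec.dim W"
    using vec.basis_exists by blast
  then have "vec.span B = W" using assms vec.span_subspace by blast
  then show ?thesis using card_span_independent[OF B(2)] B(4) by simp
qed

text \<open>Subspaces W with U \<subseteq> W \<subseteq> V are counted through the lists of vectors of V that
  extend U independently, each W arising from the same number of lists.\<close>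

fun independent_extension :: "('a::field^'n) set \<Rightarrow> ('a^'n) list \<Rightarrow> bool" where
  "independent_extension U [] = True"
| "independent_extension U (v # vs) \<longleftrightarrow>
     independent_extension U vs \<and> v \<notin> vec.span (U \<union> set vs)"

definition independent_extensions ::
    "('a::field^'n) set \<Rightarrow> ('a^'n) set \<Rightarrow> nat \<Rightarrow> ('a^'n) list set" where
  "independent_extensions U V r = {vs. length vs = r \<and> set vs \<subseteq> V \<and> independent_extension U vs}"

lemma dim_span_independent_extension:
  fixes U :: "('a::field^'n) set"
  assumes "vec.subspace U" "independent_extension U vs"
  shows "vec.dim (vec.span (U \<union> set vs)) = vec.dim U + length vs"
  using assms(2)
proof (induction vs)
  case Nil
  then show ?case using assms(1) by (simp add: vec.span_eq_iff)
next
  case (Cons v vs)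
  then show ?case by (simp add: vec.dim_insert)
qed

lemma finite_independent_extensions:
  "finite (independent_extensions U (V :: ('a::{field,finite}^'n) set) r)"
  unfolding independent_extensions_def
  by (rule finite_subset[OF _ finite_lists_length_eq[of UNIV r]]) auto

lemma independent_extensions_Suc:
  "independent_extensions U V (Suc r)
    = (\<lambda>(vs, v). v # vs) ` (SIGMA vs:independent_extensions U V r. V - vec.span (U \<union> set vs))"
  (is "?L = ?R")
proof
  show "?L \<subseteq> ?R"
  proof
    fix ws assume "ws \<in> ?L"
    then obtain v vs where "ws = v # vs" "length vs = r" "set (v # vs) \<subseteq> V"
        "independent_extension U (v # vs)"
      unfolding independent_extensions_def by (cases ws) auto
    then show "ws \<in> ?R"
      by (intro image_eqI[of _ _ "(vs, v)"]) (auto simp: independent_extensions_def)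
  qed
  show "?R \<subseteq> ?L"
    by (auto simp: independent_extensions_def)
qed

lemma card_independent_extensions:
  fixes U V :: "('a::{field,finite}^'n) set"
  assumes U: "vec.subspace U" and V: "vec.subspace V" and UV: "U \<subseteq> V"
    and r: "vec.dim U + r \<le> vec.dim V"
  shows "card (independent_extensions U V r)
    = (\<Prod>i<r. CARD('a) ^ vec.dim V - CARD('a) ^ (vec.dim U + i))"
  using r
proof (induction r)
  case 0
  have "independent_extensions U V 0 = {[]}" by (auto simp: independent_extensions_def)
  then show ?case by simp
next
  case (Suc r)
  let ?q = "CARD('a)" and ?L = "independent_extensions U V"
  define C where "C vs = V - vec.span (U \<union> set vs)" for vs
  have L_eq: "?L (Suc r) = (\<lambda>(vs, v). v # vs) ` (SIGMA vs:?L r. C vs)"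
    unfolding C_def by (rule independent_extensions_Suc)
  have card_C: "card (C vs) = ?q ^ vec.dim V - ?q ^ (vec.dim U + r)" if "vs \<in> ?L r" for vs
  proof -
    have "vec.span (U \<union> set vs) \<subseteq> V"
      using that V UV by (auto simp: independent_extensions_def vec.span_minimal)
    moreover have "card (vec.span (U \<union> set vs)) = ?q ^ (vec.dim U + r)"
      using dim_span_independent_extension[OF U] that
        card_subspace[OF vec.subspace_span[of "U \<union> set vs"]]
      by (auto simp: independent_extensions_def)
    ultimately show ?thesis
      unfolding C_def using card_subspace[OF V] by (simp add: card_Diff_subset)
  qed
  have "card (?L (Suc r)) = card (SIGMA vs:?L r. C vs)"
    unfolding L_eq by (rule card_image) (auto intro: inj_onI)
  also have "\<dots> = (\<Sum>vs\<in>?L r. card (C vs))"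
    by (rule card_SigmaI) (auto simp: finite_independent_extensions)
  also have "\<dots> = card (?L r) * (?q ^ vec.dim V - ?q ^ (vec.dim U + r))"
    using card_C by simp
  finally show ?case using Suc by simp
qed

lemma card_subspaces_between_mult:
  fixes U V :: "('a::{field,finite}^'n) set"
  assumes U: "vec.subspace U" and V: "vec.subspace V" and UV: "U \<subseteq> V"
    and m: "vec.dim U \<le> m" "m \<le> vec.dim V"
  shows "card {W. vec.subspace W \<and> vec.dim W = m \<and> U \<subseteq> W \<and> W \<subseteq> V}
      * (\<Prod>i<m - vec.dim U. CARD('a) ^ m - CARD('a) ^ (vec.dim U + i))
    = (\<Prod>i<m - vec.dim U. CARD('a) ^ vec.dim V - CARD('a) ^ (vec.dim U + i))"
proof -
  let ?X = "{W. vec.subspace W \<and> vec.dim W = m \<and> U \<subseteq> W \<and> W \<subseteq> V}"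
  let ?r = "m - vec.dim U" and ?L = "\<lambda>W. independent_extensions U W (m - vec.dim U)"
  have L_eq: "?L V = (\<Union>W\<in>?X. ?L W)"
  proof
    show "?L V \<subseteq> (\<Union>W\<in>?X. ?L W)"
    proof
      fix vs assume vs: "vs \<in> ?L V"
      let ?W = "vec.span (U \<union> set vs)"
      have "?W \<in> ?X" "vs \<in> ?L ?W"
        using vs dim_span_independent_extension[OF U, of vs] m UV V
        by (auto simp: independent_extensions_def vec.span_superset[THEN subsetD]
            vec.span_minimal)
      then show "vs \<in> (\<Union>W\<in>?X. ?L W)" by blast
    qed
    show "(\<Union>W\<in>?X. ?L W) \<subseteq> ?L V"
      by (auto simp: independent_extensions_def)
  qed
  have spanned: "W = vec.span (U \<union> set vs)" if "W \<in> ?X" "vs \<in> ?L W" for W vs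
  proof -
    have sub: "vec.span (U \<union> set vs) \<subseteq> W"
      using that by (auto simp: independent_extensions_def vec.span_minimal)
    have "vec.dim (vec.span (U \<union> set vs)) = m"
      using dim_span_independent_extension[OF U, of vs] that m
      by (auto simp: independent_extensions_def)
    then show ?thesis
      using vec.subspace_dim_equal[OF vec.subspace_span _ sub] that by auto
  qed
  have "card (?L V) = (\<Sum>W\<in>?X. card (?L W))"
    unfolding L_eq
    by (rule card_UN_disjoint) (simp_all add: finite_independent_extensions, use spanned in blast)
  also have "\<dots> = (\<Sum>W\<in>?X. \<Prod>i<?r. CARD('a) ^ m - CARD('a) ^ (vec.dim U + i))"
    by (rule sum.cong) (use card_independent_extensions[OF U] m in auto)
  finally show ?thesis
    using card_independent_extensions[OF U V UV] m by (simp add: mult.commute)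
qed

lemma prod_power_diff_quotient:
  fixes q :: real
  assumes q: "q \<ge> 2" and r: "u + r \<le> N"
  shows "(\<Prod>i<r. q ^ N - q ^ (u + i)) / (\<Prod>i<r. q ^ (u + r) - q ^ (u + i))
    = (\<Prod>i<r. (q ^ (N - u - i) - 1) / (q ^ (i + 1) - 1))"
proof -
  have factor: "q ^ M - q ^ (u + i) = q ^ (u + i) * (q ^ (M - u - i) - 1)"
    if "u + i \<le> M" for M i
  proof -
    have "q ^ M = q ^ (u + i) * q ^ (M - u - i)"
      using that by (metis add_diff_inverse_nat diff_diff_left not_le power_add)
    then show ?thesis by (simp add: algebra_simps)
  qed
  have num: "(\<Prod>i<r. q ^ N - q ^ (u + i))
      = (\<Prod>i<r. q ^ (u + i)) * (\<Prod>i<r. q ^ (N - u - i) - 1)"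
    unfolding prod.distrib[symmetric] using r by (intro prod.cong) (auto simp: factor)
  have "(\<Prod>i<r. q ^ (u + r) - q ^ (u + i))
      = (\<Prod>i<r. q ^ (u + i)) * (\<Prod>i<r. q ^ (r - i) - 1)"
    unfolding prod.distrib[symmetric] by (intro prod.cong) (auto simp: factor)
  also have "(\<Prod>i<r. q ^ (r - i) - 1) = (\<Prod>i<r. q ^ (i + 1) - 1)"
    using prod.nat_diff_reindex[of "\<lambda>j. q ^ (j + 1) - 1" r]
    by (simp add: Suc_diff_Suc)
  finally have den: "(\<Prod>i<r. q ^ (u + r) - q ^ (u + i))
      = (\<Prod>i<r. q ^ (u + i)) * (\<Prod>i<r. q ^ (i + 1) - 1)" .
  have "(\<Prod>i<r. q ^ (u + i)) \<noteq> 0" using q by simp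
  then show ?thesis unfolding num den prod_dividef by (rule mult_divide_mult_cancel_left)
qed

lemma card_field_ge_2: "CARD('a::{field,finite}) \<ge> 2"
proof -
  have "card {0::'a, 1} \<le> CARD('a)" by (rule card_mono) auto
  then show ?thesis by simp
qed

lemma card_subspaces_between:
  fixes U V :: "('a::{field,finite}^'n) set"
  assumes U: "vec.subspace U" and V: "vec.subspace V" and UV: "U \<subseteq> V"
    and m: "vec.dim U \<le> m" "m \<le> vec.dim V"
  shows "real (card {W. vec.subspace W \<and> vec.dim W = m \<and> U \<subseteq> W \<and> W \<subseteq> V})
    = gbinom CARD('a) (int (vec.dim V) - int (vec.dim U)) (int m - int (vec.dim U))"
proof -
  let ?X = "{W. vec.subspace W \<and> vec.dim W = m \<and> U \<subseteq> W \<and> W \<subseteq> V}"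
  let ?q = "CARD('a)"
  define u where "u = vec.dim U"
  define N where "N = vec.dim V"
  define r where "r = m - u"
  have mr: "m = u + r" and rN: "u + r \<le> N" using m unfolding r_def u_def N_def by auto
  have q: "real ?q \<ge> 2" using card_field_ge_2[where 'a='a] by simp
  have real_prod: "real (\<Prod>i<r. ?q ^ M - ?q ^ (u + i)) = (\<Prod>i<r. real ?q ^ M - real ?q ^ (u + i))"
    if "u + r \<le> M" for M
    unfolding of_nat_prod
    by (rule prod.cong[OF refl]) (use that in \<open>auto simp: of_nat_diff power_increasing\<close>)
  have "real (card ?X) * (\<Prod>i<r. real ?q ^ (u + r) - real ?q ^ (u + i))
      = (\<Prod>i<r. real ?q ^ N - real ?q ^ (u + i))"
    using arg_cong[OF card_subspaces_between_mult[OF U V UV m], of real] mr rN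
    unfolding u_def[symmetric] N_def[symmetric] r_def[symmetric]
    by (simp only: of_nat_mult real_prod order_refl)
  moreover have "(\<Prod>i<r. real ?q ^ (u + r) - real ?q ^ (u + i)) \<noteq> 0"
    using q by (auto simp: power_strict_increasing_iff)
  ultimately have "real (card ?X)
      = (\<Prod>i<r. real ?q ^ N - real ?q ^ (u + i)) / (\<Prod>i<r. real ?q ^ (u + r) - real ?q ^ (u + i))"
    by (simp add: field_simps)
  also have "\<dots> = (\<Prod>i<r. (real ?q ^ (N - u - i) - 1) / (real ?q ^ (i + 1) - 1))"
    by (rule prod_power_diff_quotient[OF q rN])
  also have "\<dots> = gbinom ?q (int N - int u) (int m - int u)"
    unfolding gbinom_def using mr rN by (simp add: nat_diff_distrib)
  finally show ?thesis unfolding u_def N_def .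
qed

section \<open>Affine subspaces\<close>

definition aff_coset :: "'a::field^'n \<Rightarrow> ('a^'n) set \<Rightarrow> ('a^'n) set" where
  "aff_coset p W = (\<lambda>w. p + w) ` W"

definition direction :: "('a::field^'n) set \<Rightarrow> ('a^'n) set" where
  "direction S = {x - y | x y. x \<in> S \<and> y \<in> S}"

lemma adim_eq_dim_direction: "adim S = vec.dim (direction S)"
  unfolding adim_def direction_def ..

lemma mem_aff_coset_iff: "x \<in> aff_coset p W \<longleftrightarrow> x - p \<in> W"
  unfolding aff_coset_def by (auto intro: image_eqI[of _ _ "x - p"])

lemma aff_sub_aff_coset: "vec.subspace W \<Longrightarrow> aff_sub (aff_coset p W)"
  unfolding aff_sub_def aff_coset_def by blast

lemma direction_aff_coset:
  assumes "vec.subspace W"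
  shows "direction (aff_coset p W) = W"
proof
  show "direction (aff_coset p W) \<subseteq> W"
    using assms by (auto simp: direction_def aff_coset_def intro: vec.subspace_diff)
  show "W \<subseteq> direction (aff_coset p W)"
  proof
    fix w assume "w \<in> W"
    then have "p + w \<in> aff_coset p W" "p \<in> aff_coset p W"
      using vec.subspace_0[OF assms] by (simp_all add: mem_aff_coset_iff)
    moreover have "w = (p + w) - p" by simp
    ultimately show "w \<in> direction (aff_coset p W)" unfolding direction_def by blast
  qed
qed

lemma adim_aff_coset: "vec.subspace W \<Longrightarrow> adim (aff_coset p W) = vec.dim W"
  by (simp add: adim_eq_dim_direction direction_aff_coset)

lemma aff_sub_obtain_coset:
  assumes "aff_sub S"
  obtains v W where "vec.subspace W" "S = aff_coset v W"
  using assms unfolding aff_sub_def aff_coset_def by blast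

lemma subspace_direction: "aff_sub S \<Longrightarrow> vec.subspace (direction S)"
  by (elim aff_sub_obtain_coset) (simp add: direction_aff_coset)

lemma aff_sub_nonempty:
  assumes "aff_sub S"
  shows "S \<noteq> {}"
proof -
  obtain v W where "vec.subspace W" "S = aff_coset v W"
    using aff_sub_obtain_coset[OF assms] .
  then have "v \<in> S" by (simp add: mem_aff_coset_iff vec.subspace_0)
  then show ?thesis by blast
qed

lemma aff_sub_eq_aff_coset:
  assumes "aff_sub S" "p \<in> S"
  shows "S = aff_coset p (direction S)"
proof -
  obtain v W where W: "vec.subspace W" "S = aff_coset v W"
    using aff_sub_obtain_coset[OF assms(1)] .
  then have pv: "p - v \<in> W" using assms(2) mem_aff_coset_iff by blast
  have "x - v \<in> W \<longleftrightarrow> x - p \<in> W" for x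
    using vec.subspace_diff[OF W(1) _ pv, of "x - v"] vec.subspace_add[OF W(1) _ pv, of "x - p"]
    by auto
  then have "S = aff_coset p W" using W(2) by (auto simp: mem_aff_coset_iff)
  then show ?thesis using direction_aff_coset[OF W(1)] by simp
qed

lemma mem_aff_sub_iff:
  assumes "aff_sub S" "p \<in> S"
  shows "x \<in> S \<longleftrightarrow> x - p \<in> direction S"
  using aff_sub_eq_aff_coset[OF assms] mem_aff_coset_iff by blast

lemma direction_mono: "S \<subseteq> T \<Longrightarrow> direction S \<subseteq> direction T"
  unfolding direction_def by blast

lemma adim_mono: "S \<subseteq> T \<Longrightarrow> adim S \<le> adim T"
  unfolding adim_eq_dim_direction by (intro vec.dim_subset direction_mono)

lemma aff_sub_eq_if_adim_le:
  assumes "aff_sub S" "aff_sub T" "S \<subseteq> T" "adim T \<le> adim S"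
  shows "S = T"
proof -
  obtain p where p: "p \<in> S" using aff_sub_nonempty[OF assms(1)] by blast
  have "direction S = direction T"
    using vec.subspace_dim_equal[OF subspace_direction[OF assms(1)]
        subspace_direction[OF assms(2)] direction_mono[OF assms(3)]] assms(4)
    unfolding adim_eq_dim_direction by simp
  then show ?thesis
    using aff_sub_eq_aff_coset[OF assms(1) p] aff_sub_eq_aff_coset[OF assms(2)] p assms(3)
    by auto
qed

lemma adim_less_if_psubset:
  assumes "aff_sub S" "aff_sub T" "S \<subset> T"
  shows "adim S < adim T"
  using aff_sub_eq_if_adim_le[OF assms(1,2)] assms(3) by fastforce

lemma aff_sub_Int:
  assumes "aff_sub S" "aff_sub T" "p \<in> S" "p \<in> T"
  shows "S \<inter> T = aff_coset p (direction S \<inter> direction T)"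
proof -
  have "x \<in> S \<inter> T \<longleftrightarrow> x - p \<in> direction S \<inter> direction T" for x
    using mem_aff_sub_iff[OF assms(1,3)] mem_aff_sub_iff[OF assms(2,4)] by blast
  then show ?thesis unfolding set_eq_iff mem_aff_coset_iff by blast
qed

lemma aff_sub_Int_aff_sub:
  assumes "aff_sub S" "aff_sub T" "S \<inter> T \<noteq> {}"
  shows "aff_sub (S \<inter> T)"
proof -
  obtain p where "p \<in> S" "p \<in> T" using assms(3) by blast
  then show ?thesis
    using aff_sub_Int[OF assms(1,2)] aff_sub_aff_coset[OF vec.subspace_inter[OF
        subspace_direction[OF assms(1)] subspace_direction[OF assms(2)]]]
    by simp
qed

lemma adim_Int_less:
  assumes "aff_sub S" "aff_sub T" "S \<inter> T \<noteq> {}" "\<not> S \<subseteq> T"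
  shows "adim (S \<inter> T) < adim S"
  using adim_less_if_psubset[OF aff_sub_Int_aff_sub[OF assms(1-3)] assms(1)] assms(4) by blast

lemma Int_eq_hyperplane:
  assumes T: "aff_sub T" and X: "aff_sub X" and \<pi>: "aff_sub \<pi>" "\<pi> \<subseteq> X" "\<pi> \<subseteq> T"
    and "\<not> T \<subseteq> X" "adim T = adim \<pi> + 1"
  shows "X \<inter> T = \<pi>"
proof -
  have meet: "T \<inter> X \<noteq> {}" using aff_sub_nonempty[OF \<pi>(1)] \<pi>(2,3) by blast
  then have "adim (T \<inter> X) \<le> adim \<pi>" using adim_Int_less[OF T X] assms(6,7) by simp
  then have "\<pi> = T \<inter> X"
    using aff_sub_eq_if_adim_le[OF \<pi>(1) aff_sub_Int_aff_sub[OF T X meet]] \<pi>(2,3) by blast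
  then show ?thesis by blast
qed

lemma aff_coset_direction_disjoint:
  assumes T: "aff_sub T" and c: "c \<notin> T"
  shows "aff_coset c (direction T) \<inter> T = {}"
proof (rule ccontr)
  assume "aff_coset c (direction T) \<inter> T \<noteq> {}"
  then obtain x where x: "x \<in> T" "x - c \<in> direction T" by (auto simp: mem_aff_coset_iff)
  then have "c - x \<in> direction T" using vec.subspace_neg[OF subspace_direction[OF T]] by fastforce
  then show False using c mem_aff_sub_iff[OF T x(1)] by blast
qed

lemma aff_sub_extend:
  fixes S :: "('a::field^'n) set"
  assumes S: "aff_sub S" and x: "x \<notin> S"
  obtains E where "aff_sub E" "S \<subseteq> E" "x \<in> E" "adim E = adim S + 1"
    "\<And>U. aff_sub U \<Longrightarrow> S \<subseteq> U \<Longrightarrow> x \<in> U \<Longrightarrow> E \<subseteq> U"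
proof -
  obtain p where p: "p \<in> S" using aff_sub_nonempty[OF S] by blast
  define W where "W = vec.span (insert (x - p) (direction S))"
  have W: "vec.subspace W" unfolding W_def by (rule vec.subspace_span)
  have dir_W: "direction S \<subseteq> W" "x - p \<in> W"
    unfolding W_def by (auto intro: vec.span_base)
  show ?thesis
  proof
    show "aff_sub (aff_coset p W)" by (rule aff_sub_aff_coset[OF W])
    show "S \<subseteq> aff_coset p W" "x \<in> aff_coset p W"
      using mem_aff_sub_iff[OF S p] dir_W by (auto simp: mem_aff_coset_iff)
    show "aff_coset p W \<subseteq> U" if U: "aff_sub U" "S \<subseteq> U" "x \<in> U" for U
    proof -
      have pU: "p \<in> U" using U p by blast
      have "insert (x - p) (direction S) \<subseteq> direction U"
        using direction_mono[OF U(2)] mem_aff_sub_iff[OF U(1) pU] U(3) by blast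
      then have "W \<subseteq> direction U"
        unfolding W_def using subspace_direction[OF U(1)] by (simp add: vec.span_minimal)
      then show ?thesis using mem_aff_sub_iff[OF U(1) pU] by (auto simp: mem_aff_coset_iff)
    qed
    have "x - p \<notin> direction S" using mem_aff_sub_iff[OF S p] x by blast
    then have "x - p \<notin> vec.span (direction S)"
      unfolding vec.span_eq_iff[THEN iffD2, OF subspace_direction[OF S]] .
    then have "vec.dim W = adim S + 1"
      unfolding W_def adim_eq_dim_direction by (simp add: vec.dim_insert)
    then show "adim (aff_coset p W) = adim S + 1" using adim_aff_coset[OF W] by simp
  qed
qed

lemma aff_sub_join:
  fixes S T :: "('a::field^'n) set"
  assumes S: "aff_sub S" and T: "aff_sub T" and meet: "S \<inter> T \<noteq> {}"
  obtains J where "aff_sub J" "S \<subseteq> J" "T \<subseteq> J" "adim J + adim (S \<inter> T) = adim S + adim T"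
proof -
  obtain p where p: "p \<in> S" "p \<in> T" using meet by blast
  have dS: "vec.subspace (direction S)" and dT: "vec.subspace (direction T)"
    using subspace_direction S T by auto
  define W where "W = vec.span (direction S \<union> direction T)"
  have W: "vec.subspace W" unfolding W_def by (rule vec.subspace_span)
  show ?thesis
  proof
    show "aff_sub (aff_coset p W)" by (rule aff_sub_aff_coset[OF W])
    show "S \<subseteq> aff_coset p W" "T \<subseteq> aff_coset p W"
      using mem_aff_sub_iff[OF S p(1)] mem_aff_sub_iff[OF T p(2)]
      by (auto simp: mem_aff_coset_iff W_def intro: vec.span_base)
    have "W = {x + y |x y. x \<in> direction S \<and> y \<in> direction T}"
      unfolding W_def vec.span_Un vec.span_eq_iff[THEN iffD2, OF dS]
        vec.span_eq_iff[THEN iffD2, OF dT] ..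
    then have "adim (aff_coset p W) = vec.dim {x + y |x y. x \<in> direction S \<and> y \<in> direction T}"
      using adim_aff_coset[OF W] by simp
    moreover have "adim (S \<inter> T) = vec.dim (direction S \<inter> direction T)"
      unfolding aff_sub_Int[OF S T p] by (rule adim_aff_coset[OF vec.subspace_inter[OF dS dT]])
    ultimately show "adim (aff_coset p W) + adim (S \<inter> T) = adim S + adim T"
      using vec.dim_sums_Int[OF dS dT] by (simp add: adim_eq_dim_direction)
  qed
qed

lemma aff_sub_UNIV: "aff_sub (UNIV :: ('a::field^'n) set)"
  using aff_sub_aff_coset[OF vec.subspace_UNIV, of 0] by (simp add: aff_coset_def)

lemma adim_UNIV: "adim (UNIV :: ('a::field^'n) set) = CARD('n)"
proof -
  have "direction (UNIV :: ('a^'n) set) = UNIV"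
    unfolding direction_def by (auto, metis diff_zero)
  then show ?thesis by (simp add: adim_eq_dim_direction card_cart_basis)
qed

lemma aff_sub_singleton: "aff_sub {p :: 'a::field^'n}"
  using aff_sub_aff_coset[OF vec.subspace_span[of "{}"], of p]
  by (simp add: aff_coset_def)

lemma adim_singleton: "adim {p :: 'a::field^'n} = 0"
  unfolding adim_eq_dim_direction direction_def by simp

lemma meets_t_if_subset:
  assumes "aff_sub S" "S \<subseteq> T" "t \<le> adim S"
  shows "meets_t t S T"
  using assms aff_sub_nonempty by (simp add: meets_t_def Int_absorb2)

section \<open>Counting affine subspaces\<close>

lemma card_aff_subs_between_le:
  fixes A B :: "('a::{field,finite}^'n) set"
  assumes A: "aff_sub A" and B: "aff_sub B" and AB: "A \<subseteq> B" and m: "m \<le> adim B"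
  shows "real (card {X. aff_sub X \<and> adim X = m \<and> A \<subseteq> X \<and> X \<subseteq> B})
    \<le> gbinom CARD('a) (int (adim B) - int (adim A)) (int m - int (adim A))"
proof (cases "adim A \<le> m")
  case False
  have "adim A \<le> adim X" if "A \<subseteq> X" for X using that by (rule adim_mono)
  then have "{X. aff_sub X \<and> adim X = m \<and> A \<subseteq> X \<and> X \<subseteq> B} = {}"
    using False by auto
  then show ?thesis using False by (simp add: gbinom_def)
next
  case True
  obtain p where p: "p \<in> A" using aff_sub_nonempty[OF A] by blast
  let ?X = "{X. aff_sub X \<and> adim X = m \<and> A \<subseteq> X \<and> X \<subseteq> B}"
  let ?W = "{W. vec.subspace W \<and> vec.dim W = m \<and> direction A \<subseteq> W \<and> W \<subseteq> direction B}"
  have "inj_on direction ?X"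
  proof (rule inj_onI)
    fix X Y assume "X \<in> ?X" "Y \<in> ?X" "direction X = direction Y"
    then show "X = Y" using aff_sub_eq_aff_coset[of X p] aff_sub_eq_aff_coset[of Y p] p by auto
  qed
  moreover have "direction ` ?X \<subseteq> ?W"
    using subspace_direction direction_mono by (auto simp: adim_eq_dim_direction)
  ultimately have "card ?X \<le> card ?W" by (simp add: card_inj_on_le)
  then have "real (card ?X) \<le> real (card ?W)" by simp
  also have "\<dots> = gbinom CARD('a) (int (adim B) - int (adim A)) (int m - int (adim A))"
    using card_subspaces_between[OF subspace_direction[OF A] subspace_direction[OF B]
        direction_mono[OF AB]] True m
    by (simp add: adim_eq_dim_direction)
  finally show ?thesis .
qed

lemma gbinom_nonneg:
  assumes "q \<ge> 2"
  shows "gbinom q N K \<ge> 0"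
proof -
  have "0 \<le> real q ^ j - 1" for j using one_le_power[of "real q" j] assms by simp
  then have "0 \<le> (real q ^ j - 1) / (real q ^ i - 1)" for i j
    by (intro divide_nonneg_nonneg)
  then show ?thesis unfolding gbinom_def by (simp add: prod_nonneg del: power_Suc)
qed

lemma gbinom_one: "N \<ge> 0 \<Longrightarrow> gbinom q N 1 = (real q ^ nat N - 1) / (real q - 1)"
  unfolding gbinom_def by simp

lemma gbinom_Suc_diagonal:
  assumes q: "q \<ge> 2"
  shows "gbinom q (int N + 1) (int N) = theta q N"
proof -
  let ?q = "real q"
  have reindex: "(\<Prod>i<N. ?q ^ (N + 1 - i) - 1) = (\<Prod>i<N. ?q ^ (i + 2) - 1)"
    using prod.nat_diff_reindex[of "\<lambda>j. ?q ^ (j + 2) - 1" N]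
    by (simp add: Suc_diff_Suc Suc_diff_le)
  have telescope: "(\<Prod>i<M. ?q ^ (i + 2) - 1) * (?q - 1) = (\<Prod>i<M. ?q ^ (i + 1) - 1) * (?q ^ (M + 1) - 1)"
    for M
  proof (induction M)
    case (Suc M)
    have "(\<Prod>i<Suc M. ?q ^ (i + 2) - 1) * (?q - 1)
        = (\<Prod>i<M. ?q ^ (i + 2) - 1) * (?q - 1) * (?q ^ (M + 2) - 1)"
      by (simp add: algebra_simps)
    also have "\<dots> = (\<Prod>i<Suc M. ?q ^ (i + 1) - 1) * (?q ^ (Suc M + 1) - 1)"
      using Suc by simp
    finally show ?case .
  qed simp
  have pos: "(\<Prod>i<N. ?q ^ (i + 1) - 1) > 0"
  proof (rule prod_pos)
    fix i
    show "0 < ?q ^ (i + 1) - 1" using one_less_power[of ?q "i + 1"] q by simp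
  qed
  have "gbinom q (int N + 1) (int N) = (\<Prod>i<N. (?q ^ (N + 1 - i) - 1) / (?q ^ (i + 1) - 1))"
    unfolding gbinom_def by (simp add: nat_add_distrib del: power_Suc)
  also have "\<dots> = (\<Prod>i<N. ?q ^ (i + 2) - 1) / (\<Prod>i<N. ?q ^ (i + 1) - 1)"
    unfolding prod_dividef reindex ..
  also have "\<dots> = theta q N"
  proof -
    have quotient: "A / B = C / D" if "A * D = B * C" "B \<noteq> 0" "D \<noteq> 0" for A B C D :: real
      using that by (simp add: frac_eq_eq mult.commute)
    show ?thesis
      unfolding theta_def using pos q by (intro quotient[OF telescope[of N]]) (linarith, simp)
  qed
  finally show ?thesis .
qed

lemma theta_ge_3:
  assumes q: "q \<ge> 2" and m: "m \<ge> 1"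
  shows "theta q m \<ge> 3"
proof -
  have "real q ^ 2 \<le> real q ^ (m + 1)" using q m by (intro power_increasing) auto
  then have "(real q + 1) * (real q - 1) \<le> real q ^ (m + 1) - 1"
    by (simp add: power2_eq_square algebra_simps)
  then have "real q + 1 \<le> theta q m" unfolding theta_def using q by (simp add: field_simps)
  then show ?thesis using q by simp
qed

lemma card_aff_subs_through_le_theta:
  fixes S B :: "('a::{field,finite}^'n) set"
  assumes S: "aff_sub S" and B: "aff_sub B" and SB: "S \<subseteq> B"
    and dim: "adim S < adim B" "adim B \<le> adim S + m + 1"
  shows "real (card {X. aff_sub X \<and> adim X = adim S + 1 \<and> S \<subseteq> X \<and> X \<subseteq> B})
    \<le> theta CARD('a) m"
proof -
  let ?q = "CARD('a)"
  have q: "?q \<ge> 2" by (rule card_field_ge_2)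
  have "real (card {X. aff_sub X \<and> adim X = adim S + 1 \<and> S \<subseteq> X \<and> X \<subseteq> B})
      \<le> gbinom ?q (int (adim B) - int (adim S)) 1"
    using card_aff_subs_between_le[OF S B SB, of "adim S + 1"] dim by simp
  also have "\<dots> = (real ?q ^ (adim B - adim S) - 1) / (real ?q - 1)"
    using gbinom_one dim by (simp add: nat_diff_distrib)
  also have "\<dots> \<le> theta ?q m"
    unfolding theta_def using q dim by (intro divide_right_mono diff_right_mono power_increasing) auto
  finally show ?thesis .
qed

lemma real_card_le_card_minus_one:
  assumes "finite A" "a \<in> A" "B \<subseteq> A - {a}"
  shows "real (card B) \<le> real (card A) - 1"
proof -
  have "card B \<le> card (A - {a})" using assms by (intro card_mono) auto
  moreover have "card A = Suc (card (A - {a}))" using assms(1,2) by (rule card.remove)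
  ultimately show ?thesis by simp
qed

lemma card_aff_hyperplanes_le:
  fixes T :: "('a::{field,finite}^'n) set"
  assumes T: "aff_sub T" and dim: "adim T = d + 1" "d + 1 < CARD('n)"
  shows "real (card {\<pi>. aff_sub \<pi> \<and> adim \<pi> = d \<and> \<pi> \<subseteq> T}) \<le> theta CARD('a) (d + 1) - 1"
proof -
  let ?P = "{\<pi>. aff_sub \<pi> \<and> adim \<pi> = d \<and> \<pi> \<subseteq> T}"
  have "T \<noteq> UNIV" using dim adim_UNIV[where 'a='a and 'n='n] by auto
  then obtain c where c: "c \<notin> T" by blast
  obtain E where E: "aff_sub E" "T \<subseteq> E" "c \<in> E" "adim E = adim T + 1"
    and E_least: "\<And>U. aff_sub U \<Longrightarrow> T \<subseteq> U \<Longrightarrow> c \<in> U \<Longrightarrow> E \<subseteq> U"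
    using aff_sub_extend[OF T c] by blast
  let ?Y = "{X. aff_sub X \<and> adim X = d + 1 \<and> {c} \<subseteq> X \<and> X \<subseteq> E}"
  have dT: "vec.subspace (direction T)" by (rule subspace_direction[OF T])
  define parallel where "parallel = aff_coset c (direction T)"
  have parallel: "parallel \<in> ?Y"
  proof -
    have "parallel \<subseteq> E"
      using direction_mono[OF E(2)] mem_aff_sub_iff[OF E(1,3)]
      by (auto simp: parallel_def mem_aff_coset_iff)
    then show ?thesis
      using dim vec.subspace_0[OF dT]
      by (simp add: parallel_def aff_sub_aff_coset[OF dT] adim_aff_coset[OF dT]
          adim_eq_dim_direction[of T, symmetric] mem_aff_coset_iff)
  qed
  have parallel_disjoint: "parallel \<inter> T = {}"
    unfolding parallel_def by (rule aff_coset_direction_disjoint[OF T c])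
  have "?P \<subseteq> (\<lambda>X. X \<inter> T) ` (?Y - {parallel})"
  proof
    fix \<pi> assume "\<pi> \<in> ?P"
    then have \<pi>: "aff_sub \<pi>" "adim \<pi> = d" "\<pi> \<subseteq> T" by auto
    then have "c \<notin> \<pi>" using c by blast
    then obtain X where X: "aff_sub X" "\<pi> \<subseteq> X" "c \<in> X" "adim X = adim \<pi> + 1"
        and X_least: "\<And>U. aff_sub U \<Longrightarrow> \<pi> \<subseteq> U \<Longrightarrow> c \<in> U \<Longrightarrow> X \<subseteq> U"
      using aff_sub_extend[OF \<pi>(1)] by blast
    have XE: "X \<subseteq> E" using X_least[OF E(1)] \<pi>(3) E(2,3) by blast
    have "\<not> T \<subseteq> X"
      using aff_sub_eq_if_adim_le[OF T X(1)] X(3,4) c dim \<pi>(2) by auto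
    then have "X \<inter> T = \<pi>"
      using Int_eq_hyperplane[OF T X(1) \<pi>(1) X(2) \<pi>(3)] dim \<pi>(2) by simp
    moreover have "X \<noteq> parallel"
      using parallel_disjoint \<open>X \<inter> T = \<pi>\<close> aff_sub_nonempty[OF \<pi>(1)] by auto
    ultimately show "\<pi> \<in> (\<lambda>X. X \<inter> T) ` (?Y - {parallel})" using X XE \<pi>(2) by force
  qed
  then have "card ?P \<le> card (?Y - {parallel})"
    by (rule surj_card_le[rotated]) simp
  then have "real (card ?P) \<le> real (card (?Y - {parallel}))" by simp
  moreover have "real (card (?Y - {parallel})) \<le> real (card ?Y) - 1"
    using parallel by (intro real_card_le_card_minus_one) auto
  moreover have "real (card ?Y) \<le> gbinom CARD('a) (int (d + 1) + 1) (int (d + 1))"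
    using card_aff_subs_between_le[OF aff_sub_singleton E(1), of c "d + 1"] E dim
    by (simp add: adim_singleton add.commute)
  moreover have "gbinom CARD('a) (int (d + 1) + 1) (int (d + 1)) = theta CARD('a) (d + 1)"
    by (rule gbinom_Suc_diagonal[OF card_field_ge_2])
  ultimately show ?thesis by linarith
qed

lemma card_UN_le_mult:
  assumes "finite I" "\<And>i. i \<in> I \<Longrightarrow> real (card (A i)) \<le> b" "real (card I) \<le> m" "b \<ge> 0"
  shows "real (card (\<Union>i\<in>I. A i)) \<le> m * b"
proof -
  have "real (card (\<Union>i\<in>I. A i)) \<le> (\<Sum>i\<in>I. real (card (A i)))"
    using card_UN_le[OF assms(1), of A] of_nat_mono by fastforce
  also have "\<dots> \<le> real (card I) * b" using sum_bounded_above[of I _ b] assms(2) by simp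
  also have "\<dots> \<le> m * b" using assms(3,4) by (rule mult_right_mono)
  finally show ?thesis .
qed

lemma card_kspaces_containing_le:
  fixes T :: "('a::{field,finite}^'n) set"
  assumes "aff_sub T" "k \<le> CARD('n)"
  shows "real (card {X. kspace k X \<and> T \<subseteq> X})
    \<le> gbinom CARD('a) (int CARD('n) - int (adim T)) (int k - int (adim T))"
  using card_aff_subs_between_le[OF assms(1) aff_sub_UNIV, of k] assms(2)
  by (simp add: kspace_def adim_UNIV)

text \<open>With X = (A - 1)(\<theta> - 1) the claim reads X(\<theta> - 1) \<le> (X - 1)\<theta>, that is \<theta> \<le> X.\<close>

lemma pred_mult_pred_square_le:
  fixes A \<theta> G :: real
  assumes "3 \<le> A" "3 \<le> \<theta>" "0 \<le> G"
  shows "(A - 1) * ((\<theta> - 1) * ((\<theta> - 1) * G)) \<le> (A * \<theta> - A - \<theta>) * \<theta> * G"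
proof -
  have "2 * (\<theta> - 1) \<le> (A - 1) * (\<theta> - 1)" using assms by (intro mult_right_mono) auto
  then have "(A - 1) * (\<theta> - 1) * (\<theta> - 1) \<le> (A * \<theta> - A - \<theta>) * \<theta>"
    using assms by (simp add: algebra_simps)
  then have "(A - 1) * (\<theta> - 1) * (\<theta> - 1) * G \<le> (A * \<theta> - A - \<theta>) * \<theta> * G"
    by (rule mult_right_mono[OF _ assms(3)])
  then show ?thesis by (simp add: mult.assoc)
qed

section \<open>Members of F through none of the psi-spaces\<close>

definition transversal :: "nat \<Rightarrow> ('a::field^'n) set set \<Rightarrow> ('a^'n) set \<Rightarrow> bool" where
  "transversal t F T \<longleftrightarrow> aff_sub T \<and> (\<forall>S\<in>F. meets_t t T S)"

lemma meets_t_commute: "meets_t t S T \<longleftrightarrow> meets_t t T S"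
  unfolding meets_t_def by (simp add: Int_commute)

lemma psi_le_adim: "transversal t F T \<Longrightarrow> psi t F \<le> adim T"
  unfolding psi_def transversal_def by (rule Least_le) blast

lemma mem_psi_spaces_iff: "T \<in> psi_spaces t F \<longleftrightarrow> transversal t F T \<and> adim T = psi t F"
  unfolding psi_spaces_def transversal_def by blast

lemma psi_spaces_nonempty:
  fixes F :: "('a::field^'n) set set"
  assumes "t_intersecting k t F" "t \<le> k"
  shows "psi_spaces t F \<noteq> {}"
proof -
  have "meets_t t S UNIV" if "S \<in> F" for S
    using meets_t_if_subset[of S UNIV t] assms that by (simp add: t_intersecting_def kspace_def)
  then have "\<exists>d T. aff_sub T \<and> adim T = d \<and> (\<forall>S\<in>F. meets_t t T S)"
    using aff_sub_UNIV meets_t_commute by blast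
  then have "\<exists>T. aff_sub T \<and> adim T = psi t F \<and> (\<forall>S\<in>F. meets_t t T S)"
    unfolding psi_def by (rule LeastI_ex)
  then show ?thesis by (auto simp: psi_spaces_def)
qed

locale psi_setting =
  fixes F :: "('a::{field,finite}^'n) set set" and k t :: nat and T0 :: "('a^'n) set"
  assumes intersecting: "t_intersecting k t F"
    and psi_eq: "psi t F = t + 1"
    and T0: "T0 \<in> psi_spaces t F"
    and t_less_k: "t < k"
    and k_le: "k \<le> CARD('n)"
    and t_less: "t + 1 < CARD('n)"
begin

lemma member_aff_sub: "S \<in> F \<Longrightarrow> aff_sub S"
  and member_adim: "S \<in> F \<Longrightarrow> adim S = k"
  and members_meet: "S \<in> F \<Longrightarrow> S' \<in> F \<Longrightarrow> meets_t t S S'"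
  using intersecting by (auto simp: t_intersecting_def kspace_def)

lemma T0_aff_sub: "aff_sub T0"
  and T0_adim: "adim T0 = t + 1"
  and T0_meets: "S \<in> F \<Longrightarrow> meets_t t T0 S"
  using T0 psi_eq by (auto simp: mem_psi_spaces_iff transversal_def)

lemma transversal_adim_gt: "transversal t F X \<Longrightarrow> t < adim X"
  using psi_le_adim psi_eq by fastforce

definition facets :: "('a^'n) set set" where
  "facets = {\<pi>. aff_sub \<pi> \<and> adim \<pi> = t \<and> \<pi> \<subseteq> T0}"

definition facet_span :: "('a^'n) set \<Rightarrow> ('a^'n) set" where
  "facet_span \<pi> = (SOME \<Sigma>. aff_sub \<Sigma> \<and> T0 \<subseteq> \<Sigma> \<and> adim \<Sigma> \<le> k + 1 \<and> (\<exists>b\<in>F. \<not> \<pi> \<subseteq> b \<and> b \<subseteq> \<Sigma>))"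

lemma facet_span:
  assumes "\<pi> \<in> facets"
  shows "aff_sub (facet_span \<pi>)" "T0 \<subseteq> facet_span \<pi>" "adim (facet_span \<pi>) \<le> k + 1"
    "\<exists>b\<in>F. \<not> \<pi> \<subseteq> b \<and> b \<subseteq> facet_span \<pi>"
proof -
  have \<pi>: "aff_sub \<pi>" "adim \<pi> = t" using assms by (auto simp: facets_def)
  then obtain b where b: "b \<in> F" "\<not> meets_t t \<pi> b"
    using transversal_adim_gt by (fastforce simp: transversal_def)
  then have "\<not> \<pi> \<subseteq> b" using meets_t_if_subset[OF \<pi>(1)] \<pi>(2) by auto
  have meet: "T0 \<inter> b \<noteq> {}" using T0_meets[OF b(1)] by (simp add: meets_t_def)
  obtain J where J: "aff_sub J" "T0 \<subseteq> J" "b \<subseteq> J" "adim J + adim (T0 \<inter> b) = adim T0 + adim b"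
    using aff_sub_join[OF T0_aff_sub member_aff_sub[OF b(1)] meet] by blast
  then have "adim J \<le> k + 1"
    using T0_meets[OF b(1)] T0_adim member_adim[OF b(1)] by (simp add: meets_t_def)
  then have "\<exists>\<Sigma>. aff_sub \<Sigma> \<and> T0 \<subseteq> \<Sigma> \<and> adim \<Sigma> \<le> k + 1 \<and> (\<exists>b\<in>F. \<not> \<pi> \<subseteq> b \<and> b \<subseteq> \<Sigma>)"
    using J b(1) \<open>\<not> \<pi> \<subseteq> b\<close> by blast
  from someI_ex[OF this] show "aff_sub (facet_span \<pi>)" "T0 \<subseteq> facet_span \<pi>"
    "adim (facet_span \<pi>) \<le> k + 1" "\<exists>b\<in>F. \<not> \<pi> \<subseteq> b \<and> b \<subseteq> facet_span \<pi>"
    unfolding facet_span_def by blast+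
qed

definition lifts :: "('a^'n) set \<Rightarrow> ('a^'n) set set" where
  "lifts \<pi> = {\<tau>. aff_sub \<tau> \<and> adim \<tau> = t + 1 \<and> \<pi> \<subseteq> \<tau> \<and> \<tau> \<subseteq> facet_span \<pi> \<and> \<tau> \<noteq> T0
    \<and> \<not> transversal t F \<tau>}"

lemma card_lifts_le:
  assumes "\<pi> \<in> facets"
  shows "real (card (lifts \<pi>)) \<le> theta CARD('a) (k - t) - 1"
proof -
  let ?Y = "{X. aff_sub X \<and> adim X = adim \<pi> + 1 \<and> \<pi> \<subseteq> X \<and> X \<subseteq> facet_span \<pi>}"
  have \<pi>: "aff_sub \<pi>" "adim \<pi> = t" "\<pi> \<subseteq> T0" using assms by (auto simp: facets_def)
  note \<Sigma> = facet_span[OF assms]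
  have "adim \<pi> < adim (facet_span \<pi>)"
    using adim_mono[OF \<Sigma>(2)] T0_adim \<pi>(2) by simp
  then have "real (card ?Y) \<le> theta CARD('a) (k - t)"
    using card_aff_subs_through_le_theta[OF \<pi>(1) \<Sigma>(1)] \<pi> \<Sigma>(2,3) t_less_k by force
  moreover have "real (card (lifts \<pi>)) \<le> real (card ?Y) - 1"
    using \<pi> \<Sigma>(2) T0_aff_sub T0_adim
    by (intro real_card_le_card_minus_one[of _ T0]) (auto simp: lifts_def)
  ultimately show ?thesis by simp
qed

definition lift_plane :: "('a^'n) set \<Rightarrow> ('a^'n) set" where
  "lift_plane \<tau> = (SOME K. aff_sub K \<and> \<tau> \<subseteq> K \<and> T0 \<subseteq> K \<and> adim K = t + 2)"

lemma lift_plane: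
  assumes "\<pi> \<in> facets" "\<tau> \<in> lifts \<pi>"
  shows "aff_sub (lift_plane \<tau>)" "\<tau> \<subseteq> lift_plane \<tau>" "T0 \<subseteq> lift_plane \<tau>"
    "adim (lift_plane \<tau>) = t + 2"
proof -
  have \<pi>: "aff_sub \<pi>" "adim \<pi> = t" "\<pi> \<subseteq> T0" using assms(1) by (auto simp: facets_def)
  have \<tau>: "aff_sub \<tau>" "adim \<tau> = t + 1" "\<pi> \<subseteq> \<tau>" "\<tau> \<noteq> T0" using assms(2) by (auto simp: lifts_def)
  have meet: "T0 \<inter> \<tau> \<noteq> {}" using aff_sub_nonempty[OF \<pi>(1)] \<pi>(3) \<tau>(3) by blast
  have "\<not> T0 \<subseteq> \<tau>" using aff_sub_eq_if_adim_le[OF T0_aff_sub \<tau>(1)] \<tau>(2,4) T0_adim by auto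
  then have "adim (T0 \<inter> \<tau>) < t + 1" using adim_Int_less[OF T0_aff_sub \<tau>(1) meet] T0_adim by simp
  moreover have "t \<le> adim (T0 \<inter> \<tau>)" using adim_mono[of \<pi> "T0 \<inter> \<tau>"] \<pi> \<tau>(3) by simp
  ultimately have "adim (T0 \<inter> \<tau>) = t" by simp
  moreover obtain J where "aff_sub J" "T0 \<subseteq> J" "\<tau> \<subseteq> J"
      "adim J + adim (T0 \<inter> \<tau>) = adim T0 + adim \<tau>"
    using aff_sub_join[OF T0_aff_sub \<tau>(1) meet] by blast
  ultimately have "\<exists>K. aff_sub K \<and> \<tau> \<subseteq> K \<and> T0 \<subseteq> K \<and> adim K = t + 2"
    using T0_adim \<tau>(2) by (intro exI[of _ J]) simp
  from someI_ex[OF this] show "aff_sub (lift_plane \<tau>)" "\<tau> \<subseteq> lift_plane \<tau>" "T0 \<subseteq> lift_plane \<tau>"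
    "adim (lift_plane \<tau>) = t + 2"
    unfolding lift_plane_def by blast+
qed

definition lift_span :: "('a^'n) set \<Rightarrow> ('a^'n) set" where
  "lift_span \<tau> = (SOME J. aff_sub J \<and> lift_plane \<tau> \<subseteq> J \<and> adim J \<le> k + 2
    \<and> (\<exists>g\<in>F. \<not> meets_t t \<tau> g \<and> g \<subseteq> J))"

lemma lift_span:
  assumes "\<pi> \<in> facets" "\<tau> \<in> lifts \<pi>"
  shows "aff_sub (lift_span \<tau>)" "lift_plane \<tau> \<subseteq> lift_span \<tau>" "adim (lift_span \<tau>) \<le> k + 2"
    "\<exists>g\<in>F. \<not> meets_t t \<tau> g \<and> g \<subseteq> lift_span \<tau>"
proof -
  note K = lift_plane[OF assms]
  obtain g where g: "g \<in> F" "\<not> meets_t t \<tau> g"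
    using assms(2) by (auto simp: lifts_def transversal_def)
  have T0g: "T0 \<inter> g \<noteq> {}" "t \<le> adim (T0 \<inter> g)" using T0_meets[OF g(1)] by (auto simp: meets_t_def)
  have meet: "lift_plane \<tau> \<inter> g \<noteq> {}" using T0g(1) K(3) by blast
  have "t \<le> adim (lift_plane \<tau> \<inter> g)"
    using T0g(2) adim_mono[of "T0 \<inter> g" "lift_plane \<tau> \<inter> g"] K(3) by fastforce
  moreover obtain J where J: "aff_sub J" "lift_plane \<tau> \<subseteq> J" "g \<subseteq> J"
      "adim J + adim (lift_plane \<tau> \<inter> g) = adim (lift_plane \<tau>) + adim g"
    using aff_sub_join[OF K(1) member_aff_sub[OF g(1)] meet] by blast
  ultimately have "adim J \<le> k + 2" using K(4) member_adim[OF g(1)] by simp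
  then have "\<exists>J. aff_sub J \<and> lift_plane \<tau> \<subseteq> J \<and> adim J \<le> k + 2
      \<and> (\<exists>g\<in>F. \<not> meets_t t \<tau> g \<and> g \<subseteq> J)"
    using J g by blast
  from someI_ex[OF this] show "aff_sub (lift_span \<tau>)" "lift_plane \<tau> \<subseteq> lift_span \<tau>"
    "adim (lift_span \<tau>) \<le> k + 2" "\<exists>g\<in>F. \<not> meets_t t \<tau> g \<and> g \<subseteq> lift_span \<tau>"
    unfolding lift_span_def by blast+
qed

definition lift_extensions :: "('a^'n) set \<Rightarrow> ('a^'n) set set" where
  "lift_extensions \<tau> = {\<nu>. aff_sub \<nu> \<and> adim \<nu> = t + 2 \<and> \<tau> \<subseteq> \<nu> \<and> \<nu> \<subseteq> lift_span \<tau>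
    \<and> \<nu> \<noteq> lift_plane \<tau>}"

lemma card_lift_extensions_le:
  assumes "\<pi> \<in> facets" "\<tau> \<in> lifts \<pi>"
  shows "real (card (lift_extensions \<tau>)) \<le> theta CARD('a) (k - t) - 1"
proof -
  let ?Y = "{X. aff_sub X \<and> adim X = adim \<tau> + 1 \<and> \<tau> \<subseteq> X \<and> X \<subseteq> lift_span \<tau>}"
  have \<tau>: "aff_sub \<tau>" "adim \<tau> = t + 1" using assms(2) by (auto simp: lifts_def)
  note K = lift_plane[OF assms] and J = lift_span[OF assms]
  have "adim \<tau> < adim (lift_span \<tau>)"
    using adim_mono[OF J(2)] K(4) \<tau>(2) by simp
  then have "real (card ?Y) \<le> theta CARD('a) (k - t)"
    using card_aff_subs_through_le_theta[OF \<tau>(1) J(1)] \<tau> K(2) J(2,3) t_less_k by force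
  moreover have "real (card (lift_extensions \<tau>)) \<le> real (card ?Y) - 1"
    using \<tau> K J(2) by (intro real_card_le_card_minus_one[of _ "lift_plane \<tau>"])
      (auto simp: lift_extensions_def)
  ultimately show ?thesis by simp
qed

definition avoiders :: "('a^'n) set set" where
  "avoiders = {\<alpha> \<in> F. \<forall>T\<in>psi_spaces t F. \<not> T \<subseteq> \<alpha>}"

lemma avoider_facet:
  assumes "\<alpha> \<in> avoiders"
  shows "T0 \<inter> \<alpha> \<in> facets"
proof -
  have \<alpha>: "\<alpha> \<in> F" "\<not> T0 \<subseteq> \<alpha>" using assms T0 by (auto simp: avoiders_def)
  have meet: "T0 \<inter> \<alpha> \<noteq> {}" "t \<le> adim (T0 \<inter> \<alpha>)" using T0_meets[OF \<alpha>(1)] by (auto simp: meets_t_def)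
  then show ?thesis
    using adim_Int_less[OF T0_aff_sub member_aff_sub[OF \<alpha>(1)] meet(1) \<alpha>(2)] T0_adim
      aff_sub_Int_aff_sub[OF T0_aff_sub member_aff_sub[OF \<alpha>(1)] meet(1)]
    by (auto simp: facets_def)
qed

lemma avoider_lift:
  assumes "\<alpha> \<in> avoiders"
  obtains \<tau> where "\<tau> \<in> lifts (T0 \<inter> \<alpha>)" "\<tau> \<subseteq> \<alpha>"
proof -
  define \<pi> where "\<pi> = T0 \<inter> \<alpha>"
  have \<alpha>: "\<alpha> \<in> F" "aff_sub \<alpha>" and avoid: "\<And>T. T \<in> psi_spaces t F \<Longrightarrow> \<not> T \<subseteq> \<alpha>"
    using assms member_aff_sub by (auto simp: avoiders_def)
  have facet: "\<pi> \<in> facets" unfolding \<pi>_def by (rule avoider_facet[OF assms])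
  then have \<pi>: "aff_sub \<pi>" "adim \<pi> = t" by (auto simp: facets_def)
  note \<Sigma> = facet_span[OF facet]
  obtain b where b: "b \<in> F" "\<not> \<pi> \<subseteq> b" "b \<subseteq> facet_span \<pi>" using \<Sigma>(4) by blast
  obtain x where x: "x \<in> \<alpha>" "x \<in> b" "x \<notin> \<pi>"
  proof (rule ccontr)
    assume "\<not> thesis"
    with that have sub: "\<alpha> \<inter> b \<subseteq> \<pi> \<inter> b" by blast
    have "\<alpha> \<inter> b \<noteq> {}" "t \<le> adim (\<alpha> \<inter> b)" using members_meet[OF \<alpha>(1) b(1)] by (auto simp: meets_t_def)
    moreover have "adim (\<pi> \<inter> b) < t"
      using adim_Int_less[OF \<pi>(1) member_aff_sub[OF b(1)] _ b(2)] sub calculation(1) \<pi>(2) by blast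
    ultimately show False using adim_mono[OF sub] by simp
  qed
  obtain \<tau> where \<tau>: "aff_sub \<tau>" "\<pi> \<subseteq> \<tau>" "x \<in> \<tau>" "adim \<tau> = adim \<pi> + 1"
      and \<tau>_least: "\<And>U. aff_sub U \<Longrightarrow> \<pi> \<subseteq> U \<Longrightarrow> x \<in> U \<Longrightarrow> \<tau> \<subseteq> U"
    using aff_sub_extend[OF \<pi>(1) x(3)] by blast
  have "\<tau> \<subseteq> \<alpha>" using \<tau>_least[OF \<alpha>(2)] x(1) by (auto simp: \<pi>_def)
  moreover have "\<tau> \<subseteq> facet_span \<pi>" using \<tau>_least[OF \<Sigma>(1)] \<Sigma>(2) b(3) x(2) by (auto simp: \<pi>_def)
  moreover have "\<tau> \<noteq> T0" using \<tau>(3) x(1,3) by (auto simp: \<pi>_def)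
  moreover have "\<not> transversal t F \<tau>"
    using avoid \<open>\<tau> \<subseteq> \<alpha>\<close> \<tau>(4) \<pi>(2) psi_eq by (auto simp: mem_psi_spaces_iff)
  ultimately show ?thesis using that \<tau> \<pi>(2) by (auto simp: lifts_def \<pi>_def)
qed

lemma avoider_lift_extension:
  assumes "\<alpha> \<in> avoiders" "\<pi> \<in> facets" "\<tau> \<in> lifts \<pi>" "\<tau> \<subseteq> \<alpha>"
  obtains \<nu> where "\<nu> \<in> lift_extensions \<tau>" "\<nu> \<subseteq> \<alpha>"
proof -
  have \<alpha>: "\<alpha> \<in> F" "aff_sub \<alpha>" "\<not> T0 \<subseteq> \<alpha>"
    using assms(1) member_aff_sub T0 by (auto simp: avoiders_def)
  have \<tau>: "aff_sub \<tau>" "adim \<tau> = t + 1" using assms(3) by (auto simp: lifts_def)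
  note K = lift_plane[OF assms(2,3)] and J = lift_span[OF assms(2,3)]
  obtain g where g: "g \<in> F" "\<not> meets_t t \<tau> g" "g \<subseteq> lift_span \<tau>" using J(4) by blast
  obtain y where y: "y \<in> \<alpha>" "y \<in> g" "y \<notin> \<tau>"
  proof (rule ccontr)
    assume "\<not> thesis"
    with that have sub: "\<alpha> \<inter> g \<subseteq> \<tau> \<inter> g" by blast
    have "\<alpha> \<inter> g \<noteq> {}" "t \<le> adim (\<alpha> \<inter> g)" using members_meet[OF \<alpha>(1) g(1)] by (auto simp: meets_t_def)
    then show False using g(2) sub adim_mono[OF sub] by (auto simp: meets_t_def)
  qed
  obtain \<nu> where \<nu>: "aff_sub \<nu>" "\<tau> \<subseteq> \<nu>" "y \<in> \<nu>" "adim \<nu> = adim \<tau> + 1"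
      and \<nu>_least: "\<And>U. aff_sub U \<Longrightarrow> \<tau> \<subseteq> U \<Longrightarrow> y \<in> U \<Longrightarrow> \<nu> \<subseteq> U"
    using aff_sub_extend[OF \<tau>(1) y(3)] by blast
  have "\<nu> \<subseteq> \<alpha>" using \<nu>_least[OF \<alpha>(2) assms(4) y(1)] .
  moreover have "\<nu> \<subseteq> lift_span \<tau>" using \<nu>_least[OF J(1)] K(2) J(2) g(3) y(2) by blast
  moreover have "\<nu> \<noteq> lift_plane \<tau>" using K(3) \<alpha>(3) \<open>\<nu> \<subseteq> \<alpha>\<close> by blast
  ultimately show ?thesis using that \<nu> \<tau>(2) by (auto simp: lift_extensions_def)
qed

lemma avoiders_subset:
  "avoiders \<subseteq> (\<Union>\<pi>\<in>facets. \<Union>\<tau>\<in>lifts \<pi>. \<Union>\<nu>\<in>lift_extensions \<tau>. {X. kspace k X \<and> \<nu> \<subseteq> X})"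
proof
  fix \<alpha> assume \<alpha>: "\<alpha> \<in> avoiders"
  then have "kspace k \<alpha>" using member_aff_sub member_adim by (auto simp: avoiders_def kspace_def)
  moreover obtain \<tau> where \<tau>: "\<tau> \<in> lifts (T0 \<inter> \<alpha>)" "\<tau> \<subseteq> \<alpha>" using avoider_lift[OF \<alpha>] .
  moreover obtain \<nu> where "\<nu> \<in> lift_extensions \<tau>" "\<nu> \<subseteq> \<alpha>"
    using avoider_lift_extension[OF \<alpha> avoider_facet[OF \<alpha>] \<tau>] .
  ultimately show "\<alpha> \<in> (\<Union>\<pi>\<in>facets. \<Union>\<tau>\<in>lifts \<pi>. \<Union>\<nu>\<in>lift_extensions \<tau>. {X. kspace k X \<and> \<nu> \<subseteq> X})"
    using avoider_facet[OF \<alpha>] by blast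
qed

lemma card_avoiders_le:
  "real (card avoiders) \<le> (theta CARD('a) (t + 1) - 1) * ((theta CARD('a) (k - t) - 1)
    * ((theta CARD('a) (k - t) - 1) * gbinom CARD('a) (int CARD('n) - int t - 2) (int k - int t - 2)))"
proof -
  let ?q = "CARD('a)"
  let ?G = "gbinom ?q (int CARD('n) - int t - 2) (int k - int t - 2)"
  have q: "?q \<ge> 2" by (rule card_field_ge_2)
  have "1 \<le> k - t" using t_less_k by simp
  then have \<theta>: "0 \<le> theta ?q (k - t) - 1" using theta_ge_3[OF q] by fastforce
  have G: "0 \<le> ?G" by (rule gbinom_nonneg[OF q])
  let ?K = "\<lambda>\<nu>. {X. kspace k X \<and> \<nu> \<subseteq> X}"
  have through_lift: "real (card (\<Union>\<nu>\<in>lift_extensions \<tau>. ?K \<nu>)) \<le> (theta ?q (k - t) - 1) * ?G"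
    if "\<pi> \<in> facets" "\<tau> \<in> lifts \<pi>" for \<pi> \<tau>
  proof (intro card_UN_le_mult card_lift_extensions_le[OF that] G)
    fix \<nu> assume "\<nu> \<in> lift_extensions \<tau>"
    then have \<nu>: "aff_sub \<nu>" "adim \<nu> = t + 2" by (auto simp: lift_extensions_def)
    show "real (card (?K \<nu>)) \<le> ?G"
      using card_kspaces_containing_le[OF \<nu>(1) k_le] \<nu>(2) by (simp add: algebra_simps)
  qed simp
  have through_facet: "real (card (\<Union>\<tau>\<in>lifts \<pi>. \<Union>\<nu>\<in>lift_extensions \<tau>. ?K \<nu>))
      \<le> (theta ?q (k - t) - 1) * ((theta ?q (k - t) - 1) * ?G)" if "\<pi> \<in> facets" for \<pi>
    by (rule card_UN_le_mult[OF _ through_lift[OF that] card_lifts_le[OF that]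
          mult_nonneg_nonneg[OF \<theta> G]]) simp
  have "card avoiders \<le> card (\<Union>\<pi>\<in>facets. \<Union>\<tau>\<in>lifts \<pi>. \<Union>\<nu>\<in>lift_extensions \<tau>. ?K \<nu>)"
    by (rule card_mono[OF _ avoiders_subset]) simp
  also have "real \<dots> \<le> (theta ?q (t + 1) - 1) * ((theta ?q (k - t) - 1) * ((theta ?q (k - t) - 1) * ?G))"
    using card_aff_hyperplanes_le[OF T0_aff_sub T0_adim t_less] \<theta> G
    by (intro card_UN_le_mult[OF _ through_facet] mult_nonneg_nonneg) (simp_all add: facets_def)
  finally show ?thesis by simp
qed


lemma card_le_psi_spaces_avoiders:
  "real (card F) \<le> real (card (psi_spaces t F))
      * gbinom CARD('a) (int CARD('n) - int t - 1) (int k - int t - 1) + real (card avoiders)"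
proof -
  let ?K = "\<lambda>T. {X. kspace k X \<and> T \<subseteq> X}"
  have "F \<subseteq> (\<Union>T\<in>psi_spaces t F. ?K T) \<union> avoiders"
    using member_aff_sub member_adim by (auto simp: avoiders_def kspace_def)
  then have "card F \<le> card ((\<Union>T\<in>psi_spaces t F. ?K T) \<union> avoiders)"
    by (rule card_mono[rotated]) simp
  also have "\<dots> \<le> card (\<Union>T\<in>psi_spaces t F. ?K T) + card avoiders"
    by (rule card_Un_le)
  finally have "real (card F) \<le> real (card (\<Union>T\<in>psi_spaces t F. ?K T)) + real (card avoiders)"
    by (simp only: of_nat_add[symmetric] of_nat_le_iff)
  moreover have "real (card (\<Union>T\<in>psi_spaces t F. ?K T)) \<le> real (card (psi_spaces t F))
      * gbinom CARD('a) (int CARD('n) - int t - 1) (int k - int t - 1)"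
  proof (rule card_UN_le_mult)
    fix T assume "T \<in> psi_spaces t F"
    then have T: "aff_sub T" "adim T = t + 1" by (auto simp: mem_psi_spaces_iff transversal_def psi_eq)
    show "real (card (?K T)) \<le> gbinom CARD('a) (int CARD('n) - int t - 1) (int k - int t - 1)"
      using card_kspaces_containing_le[OF T(1) k_le] T(2) by (simp add: algebra_simps)
  qed (simp_all add: gbinom_nonneg card_field_ge_2)
  ultimately show ?thesis by linarith
qed

end

theorem mainTheorem14:
  fixes F :: "('a::{field,finite} ^ 'n) set set"
    and k t :: nat
  defines "q \<equiv> CARD('a)"
    and "n \<equiv> CARD('n)"
  assumes "int n > 2 * int k - int t"
    and "k > t"
    and "maximal_t_intersecting k t F"
    and "psi t F = t + 1"
    and "card (psi_spaces t F) \<le> 2"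
  shows "real (card F) \<le>
    2 * gbinom q (int n - int t - 1) (int k - int t - 1)
    + (theta q (t + 1) * theta q (k - t) - theta q (t + 1) - theta q (k - t))
      * theta q (k - t) * gbinom q (int n - int t - 2) (int k - int t - 2)"
proof -
  have F: "t_intersecting k t F" using assms(5) by (simp add: maximal_t_intersecting_def)
  obtain T0 where "T0 \<in> psi_spaces t F" using psi_spaces_nonempty[OF F] assms(4) by fastforce
  then interpret psi_setting F k t T0
    using F assms(3,4,6) unfolding n_def by unfold_locales auto
  have q: "q \<ge> 2" unfolding q_def by (rule card_field_ge_2)
  have "real (card (psi_spaces t F)) * gbinom q (int n - int t - 1) (int k - int t - 1)
    \<le> 2 * gbinom q (int n - int t - 1) (int k - int t - 1)"
    using assms(7) gbinom_nonneg[OF q] by (intro mult_right_mono) simp_all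
  moreover have "(theta q (t + 1) - 1) * ((theta q (k - t) - 1) * ((theta q (k - t) - 1)
      * gbinom q (int n - int t - 2) (int k - int t - 2)))
    \<le> (theta q (t + 1) * theta q (k - t) - theta q (t + 1) - theta q (k - t))
      * theta q (k - t) * gbinom q (int n - int t - 2) (int k - int t - 2)"
    using q assms(4) by (intro pred_mult_pred_square_le theta_ge_3 gbinom_nonneg) auto
  ultimately show ?thesis
    using card_le_psi_spaces_avoiders card_avoiders_le unfolding q_def n_def by linarith
qed

end
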